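(* Let $k\ge1$. For every rational transduction $g:\Sigma^*\rightharpoonup\Lambda^*$ and every $k$-lexicographic transduction $f:\Lambda^*\rightharpoonup\Gamma^*$, the composition $f\circ g$ is $k$-lexicographic.
   Context: A rational transduction is one computed by a functional finite state transducer, i.e. a pair $(A,\mu)$ with: - $A$ a (possibly non-deterministic) finite automaton over $\Sigma$; - $\mu$ assigning an output word in $\Lambda^*$ to each transition; such that all accepting runs on a given input produce the same concatenated output. That common output is the image of the input. Alphabets are finite. For words $u,v$ of equal length over alphabets $\Sigma_1,\Sigma_2$, $u\otimes v$ is the word over $\Sigma_1\times\Sigma_2$ with $(u\otimes v)[i]=(u[i],v[i])$. A transduction is a partial function $f:\Sigma^*\rightharpoonup\Gamma^*$. A simple transduction is a transduction $f=\sum_{i=1}^n L_i\triangleright w_i$, where $L_1,\dots,L_n\subseteq\Sigma^*$ are pairwise disjoint regular languages and each $w_i\in\Gamma^{\le 1}$ is a word of length at most 1. It satisfies $f(u)=w_i$ if $u\in L_i$, and $f(u)$ is undefined if $u\notin\bigcup_iL_i$. An ordered alphabet is a pair $\lambda=(B,\prec)$ with $B$ a finite set and $\prec$ a strict linear order on $B$. The order is extended to $B^n$ for each $n$ by: $u\prec v$ iff there is $i\le n$ with $u[i]\prec v[i]$ and $u[j]=v[j]$ for all $i<j\le n$ (most significant letter on the right). For a transduction $f:(\Sigma\times B)^*\rightharpoonup\Gamma^*$, the transduction $\mathsf{maplex}_\lambda f:\Sigma^*\rightharpoonup\Gamma^*$ maps $u$ to $f(u\otimes b_1)f(u\otimes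 b_2)\cdots f(u\otimes b_m)$, where $b_1\prec\cdots\prec b_m$ is the increasing enumeration of all of $B^{|u|}$. It is defined on $u$ iff every $f(u\otimes b_j)$ is defined. The classes are defined inductively: - $\mathsf{Lex}_0$ is the class of simple transductions; - $\mathsf{Lex}_{k+1}=\{\mathsf{maplex}_\lambda f: \lambda=(B,\prec)\text{ an ordered alphabet},\ f:(\Sigma\times B)^*\rightharpoonup\Gamma^*\text{ in }\mathsf{Lex}_k\}$; - $\mathsf{Lex}=\bigcup_k\mathsf{Lex}_k$, the lexicographic transductions. Elements of $\mathsf{Lex}_k$ are called $k$-lexicographic. *)

theory Defs
  imports Main
begin

text \<open>Partial functions (transductions) are modelled as functions into option.
Finite automata have states of type nat; a run of an automaton on a word u
is a list of states of length |u|+1.\<close>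

definition is_run :: "nat set \<Rightarrow> (nat \<times> 'a \<times> nat) set \<Rightarrow> nat set \<Rightarrow> nat set
    \<Rightarrow> 'a list \<Rightarrow> nat list \<Rightarrow> bool" where
  "is_run Q \<delta> I F u qs \<longleftrightarrow> length qs = Suc (length u) \<and> set qs \<subseteq> Q \<and>
     qs ! 0 \<in> I \<and> qs ! length u \<in> F \<and>
     (\<forall>i < length u. (qs ! i, u ! i, qs ! Suc i) \<in> \<delta>)"

definition is_nfa :: "'a set \<Rightarrow> nat set \<Rightarrow> (nat \<times> 'a \<times> nat) set \<Rightarrow> nat set \<Rightarrow> nat set \<Rightarrow> bool" where
  "is_nfa A Q \<delta> I F \<longleftrightarrow> finite Q \<and> \<delta> \<subseteq> Q \<times> A \<times> Q \<and> I \<subseteq> Q \<and> F \<subseteq> Q"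

definition regular_on :: "'a set \<Rightarrow> 'a list set \<Rightarrow> bool" where
  "regular_on A L \<longleftrightarrow> (\<exists>Q \<delta> I F. is_nfa A Q \<delta> I F \<and>
      L = {u. \<exists>qs. is_run Q \<delta> I F u qs})"

definition run_output :: "(nat \<times> 'a \<times> nat \<Rightarrow> 'b list) \<Rightarrow> 'a list \<Rightarrow> nat list \<Rightarrow> 'b list" where
  "run_output \<mu> u qs = concat (map (\<lambda>i. \<mu> (qs ! i, u ! i, qs ! Suc i)) [0..<length u])"

text \<open>Rational transduction: computed by a functional finite state transducer
(input alphabet = the finite type 'a).\<close>
definition rational :: "('a list \<Rightarrow> 'b list option) \<Rightarrow> bool" where
  "rational g \<longleftrightarrow> (\<exists>Q \<delta> I F \<mu>. is_nfa UNIV Q \<delta> I F \<and>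
     (\<forall>u. (g u = None \<longleftrightarrow> \<not> (\<exists>qs. is_run Q \<delta> I F u qs)) \<and>
          (\<forall>qs. is_run Q \<delta> I F u qs \<longrightarrow> g u = Some (run_output \<mu> u qs))))"

text \<open>Simple transductions over the input alphabet A (values outside A^* irrelevant
for our use; we require undefinedness there).\<close>
definition simple_on :: "'a set \<Rightarrow> ('a list \<Rightarrow> 'c list option) \<Rightarrow> bool" where
  "simple_on A h \<longleftrightarrow> (\<exists>P :: ('a list set \<times> 'c list) list.
     (\<forall>(L, w) \<in> set P. regular_on A L \<and> length w \<le> 1) \<and>
     (\<forall>i < length P. \<forall>j < length P. i \<noteq> j \<longrightarrow> fst (P ! i) \<inter> fst (P ! j) = {}) \<and>
     (\<forall>u. (h u = None \<longleftrightarrow> (\<forall>(L, w) \<in> set P. u \<notin> L)) \<and>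
          (\<forall>(L, w) \<in> set P. u \<in> L \<longrightarrow> h u = Some w)))"

text \<open>Order on B^n, most significant letter on the right.\<close>
definition word_lt :: "'b rel \<Rightarrow> 'b list \<Rightarrow> 'b list \<Rightarrow> bool" where
  "word_lt r u v \<longleftrightarrow> (\<exists>i < length u. (u ! i, v ! i) \<in> r \<and>
      (\<forall>j. i < j \<and> j < length u \<longrightarrow> u ! j = v ! j))"

definition enum_words :: "'b set \<Rightarrow> 'b rel \<Rightarrow> nat \<Rightarrow> 'b list list" where
  "enum_words B r n = (THE xs. set xs = {b. length b = n \<and> set b \<subseteq> B} \<and>
       sorted_wrt (word_lt r) xs)"

definition maplex :: "'b set \<Rightarrow> 'b rel \<Rightarrow> (('x \<times> 'b) list \<Rightarrow> 'c list option)
     \<Rightarrow> 'x list \<Rightarrow> 'c list option" where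
  "maplex B r f u = (let ws = enum_words B r (length u) in
      if (\<forall>b \<in> set ws. f (zip u b) \<noteq> None)
      then Some (concat (map (\<lambda>b. the (f (zip u b))) ws)) else None)"

text \<open>Iterated maplex. A letter of \<Sigma> \<times> B_1 \<times> ... \<times> B_j is encoded as (a, [b_1,...,b_j]).\<close>
fun lexmap :: "(nat set \<times> nat rel) list \<Rightarrow> (('a \<times> nat list) list \<Rightarrow> 'c list option)
     \<Rightarrow> ('a \<times> nat list) list \<Rightarrow> 'c list option" where
  "lexmap [] h = h"
| "lexmap ((B, r) # Ls) h =
     maplex B r (\<lambda>w. lexmap Ls h (map (\<lambda>((a, bs), b). (a, bs @ [b])) w))"

definition tuple_alphabet :: "(nat set \<times> nat rel) list \<Rightarrow> ('a \<times> nat list) set" where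
  "tuple_alphabet Ls = {(a, bs). length bs = length Ls \<and> (\<forall>i < length Ls. bs ! i \<in> fst (Ls ! i))}"

text \<open>Ordered alphabets are finite sets of
naturals with a strict linear order (every finite ordered alphabet is isomorphic to one).\<close>
definition lex :: "nat \<Rightarrow> ('a list \<Rightarrow> 'c list option) \<Rightarrow> bool" where
  "lex k f \<longleftrightarrow> (\<exists>Ls h. length Ls = k \<and>
      (\<forall>(B, r) \<in> set Ls. finite B \<and> strict_linear_order_on B r) \<and>
      simple_on (tuple_alphabet Ls) h \<and>
      f = (\<lambda>u. lexmap Ls h (map (\<lambda>a. (a, [])) u)))"

end

theory Submission
  imports Defs "HOL-Library.Countable"
begin

text \<open>Let \<open>g\<close> be computed by a functional transducer whose transitions output at most
  \<open>c\<close> letters. On an input \<open>u\<close> of its domain, the canonical accepting run, which always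
  moves to the least co-accessible state, cuts \<open>g u\<close> into blocks \<open>o\<^sub>1 \<dots> o\<^sub>n\<close>
  with \<open>|o\<^sub>i| \<le> c\<close>. A labelling of the positions of \<open>g u\<close> by a letter of \<open>B\<close> is
  then the same as a labelling of the positions of \<open>u\<close> by words over \<open>B\<close> of length at
  most \<open>c\<close> (position \<open>i\<close> carrying the labels of \<open>o\<^sub>i\<close>) whose lengths fit the
  blocks. Since the most significant letter is on the right, concatenation turns the
  antilexicographic order of fitting padded labellings into that of the labellings of
  \<open>g u\<close>. So \<open>f \<circ> g\<close> is the same iterated \<open>maplex\<close>, over the padded alphabets, of a
  base transduction that simulates the canonical run, yields the empty word on labellings
  that do not fit, and otherwise unpads and applies the base transduction of \<open>f\<close>. That
  base transduction is simple because the canonical run can be tracked by a finite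
  automaton guessing co-accessible sets, so regular conditions on the unpadded word are
  regular conditions on the input.\<close>

section \<open>Enumerating words in antilexicographic order\<close>

lemma word_lt_irrefl: "irrefl r \<Longrightarrow> \<not> word_lt r u u"
  by (auto simp: word_lt_def irrefl_def)

lemma word_lt_trans:
  assumes "trans r" "word_lt r u v" "word_lt r v w" "length u = length v" "length v = length w"
  shows "word_lt r u w"
proof -
  obtain i where i: "i < length u" "(u!i, v!i) \<in> r"
    and above_i: "\<And>j. i < j \<Longrightarrow> j < length u \<Longrightarrow> u!j = v!j"
    using assms(2) unfolding word_lt_def by blast
  obtain i' where i': "i' < length v" "(v!i', w!i') \<in> r"
    and above_i': "\<And>j. i' < j \<Longrightarrow> j < length v \<Longrightarrow> v!j = w!j"
    using assms(3) unfolding word_lt_def by blast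
  have "(u ! max i i', w ! max i i') \<in> r"
    using i i' above_i above_i' assms(1,4) by (cases i i' rule: linorder_cases) (auto dest: transD)
  moreover have "\<forall>j. max i i' < j \<and> j < length u \<longrightarrow> u!j = w!j"
    using above_i above_i' assms(4) by simp
  ultimately show ?thesis
    unfolding word_lt_def using i(1) i'(1) assms(4) by (metis max_def)
qed

lemma word_lt_total:
  assumes "total_on B r" "length u = length v" "set u \<subseteq> B" "set v \<subseteq> B" "u \<noteq> v"
  shows "word_lt r u v \<or> word_lt r v u"
proof -
  let ?D = "{i. i < length u \<and> u!i \<noteq> v!i}"
  have "?D \<noteq> {}" using assms(2,5) nth_equalityI by blast
  then have m: "Max ?D \<in> ?D" by (intro Max_in) simp_all
  have above: "\<forall>j. Max ?D < j \<and> j < length u \<longrightarrow> u!j = v!j"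
    using Max_ge[of ?D] by fastforce
  have "u ! Max ?D \<in> B" "v ! Max ?D \<in> B" using m assms(2,3,4) by auto
  then have "(u ! Max ?D, v ! Max ?D) \<in> r \<or> (v ! Max ?D, u ! Max ?D) \<in> r"
    using assms(1) m by (auto simp: total_on_def)
  then show ?thesis unfolding word_lt_def using m above assms(2) by (metis (lifting) mem_Collect_eq)
qed

lemma word_lt_append:
  assumes "word_lt r x y" "length x = length y" "length p = length p'"
  shows "word_lt r (p @ x @ s) (p' @ y @ s)"
proof -
  obtain k where k: "k < length x" "(x!k, y!k) \<in> r"
    and above_k: "\<And>j. k < j \<Longrightarrow> j < length x \<Longrightarrow> x!j = y!j"
    using assms(1) unfolding word_lt_def by blast
  have "(p @ x @ s) ! j = (p' @ y @ s) ! j" if "length p + k < j" for j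
    using that above_k assms(2,3) by (auto simp: nth_append)
  moreover have "(p @ x @ s) ! (length p + k) = x!k" "(p' @ y @ s) ! (length p + k) = y!k"
    using k(1) assms(2,3) by (simp_all add: nth_append)
  moreover have "length p + k < length (p @ x @ s)" using k(1) by simp
  ultimately show ?thesis
    unfolding word_lt_def using k(2) by (intro exI[of _ "length p + k"]) simp
qed

lemma sorted_wrt_unique:
  assumes "sorted_wrt R xs" "sorted_wrt R ys" "set xs = set ys"
    and "\<forall>x\<in>set xs. \<not> R x x"
    and "\<forall>x\<in>set xs. \<forall>y\<in>set xs. \<forall>z\<in>set xs. R x y \<longrightarrow> R y z \<longrightarrow> R x z"
  shows "xs = ys"
  using assms
proof (induction xs arbitrary: ys)
  case (Cons x xs)
  obtain y ys' where ys: "ys = y # ys'" using Cons.prems(3) by (cases ys) auto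
  have x_min: "\<forall>z\<in>set xs. R x z" and y_min: "\<forall>z\<in>set ys'. R y z"
    using Cons.prems(1,2) ys by simp_all
  have "x = y"
  proof (rule ccontr)
    assume "x \<noteq> y"
    then have "y \<in> set xs" "x \<in> set ys'" using Cons.prems(3) ys by (metis set_ConsD list.set_intros(1))+
    then have "R x y" "R y x" using x_min y_min by blast+
    then show False using Cons.prems(4,5) \<open>y \<in> set xs\<close> by (meson list.set_intros)
  qed
  have "x \<notin> set xs" using x_min Cons.prems(4) by auto
  moreover have "x \<notin> set ys'" using y_min Cons.prems(4) \<open>x = y\<close> by auto
  ultimately have "set xs = set ys'" using Cons.prems(3) ys \<open>x = y\<close>
    by (metis insert_eq_iff list.simps(15))
  moreover have "sorted_wrt R xs" "sorted_wrt R ys'" using Cons.prems(1,2) ys by simp_all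
  ultimately have "xs = ys'" using Cons.IH Cons.prems(4,5) by (meson list.set_intros(2))
  then show ?case using ys \<open>x = y\<close> by simp
qed simp

lemma sorted_wrt_exists:
  assumes "finite S" "S \<subseteq> D"
    and "\<forall>x\<in>D. \<forall>y\<in>D. \<forall>z\<in>D. R x y \<longrightarrow> R y z \<longrightarrow> R x z"
    and "\<forall>x\<in>D. \<forall>y\<in>D. x \<noteq> y \<longrightarrow> R x y \<or> R y x"
  shows "\<exists>xs. set xs = S \<and> sorted_wrt R xs"
  using assms(1,2)
proof (induction S rule: finite_induct)
  case (insert x A)
  then obtain xs where xs: "set xs = A" "sorted_wrt R xs" by auto
  have xA: "x \<in> D" "A \<subseteq> D" using insert.prems by auto
  let ?ys = "filter (\<lambda>y. R y x) xs @ x # filter (\<lambda>y. R x y) xs"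
  have "set ?ys = insert x A" using xs assms(4) xA insert.hyps(2) by auto
  moreover have "sorted_wrt R ?ys"
    unfolding sorted_wrt_append using xs xA assms(3) by (auto simp: sorted_wrt_filter)
  ultimately show ?case by blast
qed simp

lemma enum_words_characterization:
  fixes B :: "'b set"
  assumes "finite B" "strict_linear_order_on B r"
  shows "\<exists>!xs. set xs = {b. length b = n \<and> set b \<subseteq> B} \<and> sorted_wrt (word_lt r) xs"
proof -
  let ?W = "{b. length b = n \<and> set b \<subseteq> B}"
  have r: "trans r" "irrefl r" "total_on B r"
    using assms(2) by (auto simp: strict_linear_order_on_def)
  have fin: "finite ?W" using finite_lists_length_eq[OF assms(1), of n] by (simp add: conj_commute)
  have irrefl: "\<forall>x\<in>?W. \<not> word_lt r x x" using word_lt_irrefl[OF r(2)] by blast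
  have trans: "\<forall>x\<in>?W. \<forall>y\<in>?W. \<forall>z\<in>?W. word_lt r x y \<longrightarrow> word_lt r y z \<longrightarrow> word_lt r x z"
  proof (intro ballI impI)
    fix x y z assume "x \<in> ?W" "y \<in> ?W" "z \<in> ?W" "word_lt r x y" "word_lt r y z"
    then show "word_lt r x z" using word_lt_trans[OF r(1), of x y z] by simp
  qed
  have total: "\<forall>x\<in>?W. \<forall>y\<in>?W. x \<noteq> y \<longrightarrow> word_lt r x y \<or> word_lt r y x"
  proof (intro ballI impI)
    fix x y assume "x \<in> ?W" "y \<in> ?W" "x \<noteq> y"
    then show "word_lt r x y \<or> word_lt r y x" using word_lt_total[OF r(3), of x y] by simp
  qed
  obtain xs where xs: "set xs = ?W" "sorted_wrt (word_lt r) xs"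
    using sorted_wrt_exists[OF fin subset_refl trans total] by (elim exE conjE)
  have uniq: "ys = xs" if "set ys = ?W" "sorted_wrt (word_lt r) ys" for ys
    apply (rule sorted_wrt_unique[OF that(2) xs(2)])
    unfolding that(1) xs(1) by (rule refl irrefl trans)+
  show ?thesis
    by (rule ex1I[of _ xs]) (use xs uniq in blast)+
qed

lemma
  assumes "finite B" "strict_linear_order_on B r"
  shows set_enum_words: "set (enum_words B r n) = {b. length b = n \<and> set b \<subseteq> B}"
    and sorted_enum_words: "sorted_wrt (word_lt r) (enum_words B r n)"
  using theI'[OF enum_words_characterization[OF assms]] unfolding enum_words_def by blast+

lemma enum_words_eqI:
  assumes "finite B" "strict_linear_order_on B r"
    and "set xs = {b. length b = n \<and> set b \<subseteq> B}" "sorted_wrt (word_lt r) xs"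
  shows "enum_words B r n = xs"
  unfolding enum_words_def
  by (rule the1_equality[OF enum_words_characterization[OF assms(1,2)]]) (use assms(3,4) in simp)

definition concat_defined :: "'c list option list \<Rightarrow> 'c list option" where
  "concat_defined xs = (if None \<in> set xs then None else Some (concat (map the xs)))"

lemma maplex_concat_defined:
  "maplex B r f u = concat_defined (map (\<lambda>b. f (zip u b)) (enum_words B r (length u)))"
  unfolding maplex_def concat_defined_def Let_def by (auto simp: o_def) (metis image_eqI)

lemma concat_defined_filter:
  assumes "\<forall>x\<in>set xs. \<not> P x \<longrightarrow> G x = Some []"
  shows "concat_defined (map G (filter P xs)) = concat_defined (map G xs)"
  using assms by (induction xs) (auto simp: concat_defined_def)

fun accepts :: "('s \<times> 'a \<times> 's) set \<Rightarrow> 's set \<Rightarrow> 's \<Rightarrow> 'a list \<Rightarrow> bool" where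
  "accepts \<delta> F s [] \<longleftrightarrow> s \<in> F"
| "accepts \<delta> F s (a # w) \<longleftrightarrow> (\<exists>s'. (s, a, s') \<in> \<delta> \<and> accepts \<delta> F s' w)"

lemma accepts_append:
  "accepts \<delta> F s (x @ y) \<longleftrightarrow> (\<exists>s'. accepts \<delta> {s'} s x \<and> accepts \<delta> F s' y)"
  by (induction x arbitrary: s) auto

lemma accepts_singleton_in_states:
  assumes "\<delta> \<subseteq> S \<times> A \<times> S" "s \<in> S" "accepts \<delta> {s'} s x"
  shows "s' \<in> S"
  using assms(2,3) by (induction x arbitrary: s) (use assms(1) in auto)

lemma accepts_inj_image:
  assumes "inj_on e S" "\<delta> \<subseteq> S \<times> A \<times> S" "F \<subseteq> S" "s \<in> S"
  shows "accepts {(e x, a, e y) | x a y. (x, a, y) \<in> \<delta>} (e ` F) (e s) w \<longleftrightarrow> accepts \<delta> F s w"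
  using assms(4)
proof (induction w arbitrary: s)
  case Nil
  then show ?case using assms(1,3) by (auto simp: inj_on_eq_iff)
next
  case (Cons a w)
  have "(e s, a, e') \<in> {(e x, a, e y) | x a y. (x, a, y) \<in> \<delta>} \<longleftrightarrow> (\<exists>y. (s, a, y) \<in> \<delta> \<and> e' = e y)"
    for e'
  proof -
    have "x = s" if "(x, a, y) \<in> \<delta>" "e s = e x" for x y
      using that assms(1,2) Cons.prems by (auto dest: inj_onD)
    then show ?thesis by blast
  qed
  then show ?case using Cons.IH assms(2) by auto
qed

lemma is_run_Nil: "is_run Q \<delta> I F [] qs \<longleftrightarrow> (\<exists>q. qs = [q] \<and> q \<in> Q \<and> q \<in> I \<and> q \<in> F)"
  by (auto simp: is_run_def length_Suc_conv)

lemma is_run_Cons: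
  "is_run Q \<delta> I F (a # w) (q # qs) \<longleftrightarrow>
     q \<in> I \<and> q \<in> Q \<and> (q, a, qs!0) \<in> \<delta> \<and> is_run Q \<delta> {qs!0} F w qs"
  unfolding is_run_def by (auto simp: All_less_Suc2)

lemma is_run_iff_singleton: "is_run Q \<delta> I F w qs \<longleftrightarrow> qs!0 \<in> I \<and> is_run Q \<delta> {qs!0} F w qs"
  by (auto simp: is_run_def)

lemma ex_run_Cons_iff:
  "(\<exists>qs. is_run Q \<delta> {q} F (a # w) qs) \<longleftrightarrow>
     q \<in> Q \<and> (\<exists>q'. (q, a, q') \<in> \<delta> \<and> (\<exists>qs. is_run Q \<delta> {q'} F w qs))"
proof
  assume "\<exists>qs. is_run Q \<delta> {q} F (a # w) qs"
  then obtain q0 qs where "is_run Q \<delta> {q} F (a # w) (q0 # qs)"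
    by (metis is_run_def length_Suc_conv)
  then show "q \<in> Q \<and> (\<exists>q'. (q, a, q') \<in> \<delta> \<and> (\<exists>qs. is_run Q \<delta> {q'} F w qs))"
    unfolding is_run_Cons by blast
next
  assume "q \<in> Q \<and> (\<exists>q'. (q, a, q') \<in> \<delta> \<and> (\<exists>qs. is_run Q \<delta> {q'} F w qs))"
  then obtain q' qs where "q \<in> Q" "(q, a, q') \<in> \<delta>" "is_run Q \<delta> {q'} F w qs" by blast
  moreover from this(3) have "qs!0 = q'" by (simp add: is_run_def)
  ultimately have "is_run Q \<delta> {q} F (a # w) (q # qs)" unfolding is_run_Cons by simp
  then show "\<exists>qs. is_run Q \<delta> {q} F (a # w) qs" ..
qed

lemma ex_run_singleton_iff_accepts:
  assumes "\<delta> \<subseteq> Q \<times> A \<times> Q" "F \<subseteq> Q"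
  shows "(\<exists>qs. is_run Q \<delta> {q} F w qs) \<longleftrightarrow> q \<in> Q \<and> accepts \<delta> F q w"
proof (induction w arbitrary: q)
  case Nil
  show ?case using assms(2) by (auto simp: is_run_Nil)
next
  case (Cons a w)
  show ?case unfolding ex_run_Cons_iff Cons.IH using assms(1) by auto
qed

lemma ex_run_iff_accepts:
  assumes "\<delta> \<subseteq> Q \<times> A \<times> Q" "I \<subseteq> Q" "F \<subseteq> Q"
  shows "(\<exists>qs. is_run Q \<delta> I F w qs) \<longleftrightarrow> (\<exists>q\<in>I. accepts \<delta> F q w)"
proof -
  have "(\<exists>qs. is_run Q \<delta> I F w qs) \<longleftrightarrow> (\<exists>q\<in>I. \<exists>qs. is_run Q \<delta> {q} F w qs)"
    using is_run_iff_singleton[of Q \<delta> _ F w] by (auto simp: is_run_def)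
  then show ?thesis using ex_run_singleton_iff_accepts[OF assms(1,3)] assms(2) by blast
qed

lemma regular_onE_accepts:
  assumes "regular_on A L"
  obtains Q :: "nat set" and \<delta> I F where "finite Q" "\<delta> \<subseteq> Q \<times> A \<times> Q" "I \<subseteq> Q" "F \<subseteq> Q"
    "L = {w. \<exists>q\<in>I. accepts \<delta> F q w}"
proof -
  obtain Q \<delta> I F where nfa: "is_nfa A Q \<delta> I F" and L: "L = {u. \<exists>qs. is_run Q \<delta> I F u qs}"
    using assms unfolding regular_on_def by blast
  have "finite Q" "\<delta> \<subseteq> Q \<times> A \<times> Q" "I \<subseteq> Q" "F \<subseteq> Q"
    using nfa unfolding is_nfa_def by auto
  moreover have "L = {w. \<exists>q\<in>I. accepts \<delta> F q w}"
    unfolding L using ex_run_iff_accepts[OF calculation(2-4)] by blast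
  ultimately show ?thesis by (rule that)
qed

lemma regular_on_accepts:
  fixes \<delta> :: "('s \<times> 'a \<times> 's) set"
  assumes "finite S" "\<delta> \<subseteq> S \<times> A \<times> S" "I \<subseteq> S" "F \<subseteq> S"
  shows "regular_on A {w. \<exists>s\<in>I. accepts \<delta> F s w}"
proof -
  obtain e :: "'s \<Rightarrow> nat" where e: "inj_on e S"
    using finite_imp_inj_to_nat_seg[OF assms(1)] by blast
  let ?\<delta> = "{(e x, a, e y) | x a y. (x, a, y) \<in> \<delta>}"
  have nfa: "is_nfa A (e ` S) ?\<delta> (e ` I) (e ` F)"
    unfolding is_nfa_def using assms by blast
  then have "{w. \<exists>qs. is_run (e ` S) ?\<delta> (e ` I) (e ` F) w qs} = {w. \<exists>q\<in>e ` I. accepts ?\<delta> (e ` F) q w}"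
    using ex_run_iff_accepts[of ?\<delta> "e ` S" A "e ` I" "e ` F"] unfolding is_nfa_def by simp
  also have "\<dots> = {w. \<exists>s\<in>I. accepts \<delta> F s w}"
    using accepts_inj_image[OF e assms(2,4)] assms(3) by blast
  finally show ?thesis using nfa unfolding regular_on_def by blast
qed

lemma run_output_Cons: "run_output \<mu> (a # w) (q # qs) = \<mu> (q, a, qs!0) @ run_output \<mu> w qs"
  unfolding run_output_def by (simp add: upt_conv_Cons map_Suc_upt[symmetric] o_def del: upt_Suc)

section \<open>The canonical run of a transducer\<close>

locale nfa_transducer =
  fixes Q :: "nat set" and \<delta> :: "(nat \<times> 'a::finite \<times> nat) set" and I F :: "nat set"
    and \<mu> :: "nat \<times> 'a \<times> nat \<Rightarrow> 'b list"
  assumes nfa: "is_nfa UNIV Q \<delta> I F"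
begin

lemma finite_states: "finite Q" and transitions: "\<delta> \<subseteq> Q \<times> UNIV \<times> Q"
  and initial_states: "I \<subseteq> Q" and final_states: "F \<subseteq> Q"
  using nfa by (auto simp: is_nfa_def)

lemma finite_transitions: "finite \<delta>"
  using finite_subset[OF transitions] finite_states by simp

definition coreach :: "'a list \<Rightarrow> nat set" where
  "coreach w = {q \<in> Q. accepts \<delta> F q w}"

definition pre_states :: "'a \<Rightarrow> nat set \<Rightarrow> nat set" where
  "pre_states a R = {q \<in> Q. \<exists>q'\<in>R. (q, a, q') \<in> \<delta>}"

lemma coreach_subset: "coreach w \<subseteq> Q"
  unfolding coreach_def by blast

lemma coreach_Nil: "coreach [] = F"
  unfolding coreach_def using final_states by auto

lemma coreach_Cons: "coreach (a # w) = pre_states a (coreach w)"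
  unfolding coreach_def pre_states_def using transitions by auto

lemma ex_run_iff_coreach: "(\<exists>qs. is_run Q \<delta> I F u qs) \<longleftrightarrow> I \<inter> coreach u \<noteq> {}"
  unfolding ex_run_iff_accepts[OF transitions initial_states final_states] coreach_def
  using initial_states by blast

text \<open>The canonical run always moves to the least co-accessible successor, so it is
  determined by the sets \<open>coreach\<close> of the suffixes.\<close>

definition next_state :: "nat \<Rightarrow> 'a \<Rightarrow> 'a list \<Rightarrow> nat" where
  "next_state q a w = Min {q' \<in> coreach w. (q, a, q') \<in> \<delta>}"

lemma next_state:
  assumes "q \<in> coreach (a # w)"
  shows "next_state q a w \<in> coreach w" "(q, a, next_state q a w) \<in> \<delta>"
proof -
  let ?S = "{q' \<in> coreach w. (q, a, q') \<in> \<delta>}"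
  have "?S \<noteq> {}" using assms unfolding coreach_Cons pre_states_def by blast
  moreover have "finite ?S" using finite_subset[OF coreach_subset finite_states] by simp
  ultimately have "Min ?S \<in> ?S" by (rule Min_in[rotated])
  then show "next_state q a w \<in> coreach w" "(q, a, next_state q a w) \<in> \<delta>"
    unfolding next_state_def by auto
qed

fun canonical_run :: "nat \<Rightarrow> 'a list \<Rightarrow> nat list" where
  "canonical_run q [] = [q]"
| "canonical_run q (a # w) = q # canonical_run (next_state q a w) w"

fun run_blocks :: "nat \<Rightarrow> 'a list \<Rightarrow> 'b list list" where
  "run_blocks q [] = []"
| "run_blocks q (a # w) = \<mu> (q, a, next_state q a w) # run_blocks (next_state q a w) w"

lemma canonical_run_0: "canonical_run q w ! 0 = q"
  by (cases w) auto

lemma length_run_blocks [simp]: "length (run_blocks q w) = length w"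
  by (induction w arbitrary: q) auto

lemma canonical_run_from:
  assumes "q \<in> coreach w"
  shows "is_run Q \<delta> {q} F w (canonical_run q w) \<and>
    run_output \<mu> w (canonical_run q w) = concat (run_blocks q w)"
  using assms
proof (induction w arbitrary: q)
  case Nil
  then show ?case using coreach_Nil final_states by (auto simp: is_run_Nil run_output_def)
next
  case (Cons a w)
  note step = next_state[OF Cons.prems]
  show ?case
    unfolding canonical_run.simps is_run_Cons run_output_Cons canonical_run_0
    using Cons.IH[OF step(1)] step(2) Cons.prems coreach_subset by auto
qed

definition max_output :: nat where
  "max_output = Max ((\<lambda>t. length (\<mu> t)) ` \<delta>)"

lemma length_run_blocks_le:
  assumes "q \<in> coreach w" "ob \<in> set (run_blocks q w)"
  shows "length ob \<le> max_output"
  using assms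
proof (induction w arbitrary: q)
  case (Cons a w)
  note step = next_state[OF Cons.prems(1)]
  have "length (\<mu> (q, a, next_state q a w)) \<le> max_output"
    unfolding max_output_def using step(2) finite_transitions by simp
  then show ?case using Cons.IH[OF step(1)] Cons.prems(2) by auto
qed simp

definition start_state :: "'a list \<Rightarrow> nat" where
  "start_state u = Min (I \<inter> coreach u)"

lemma start_state:
  assumes "I \<inter> coreach u \<noteq> {}"
  shows "start_state u \<in> I" "start_state u \<in> coreach u"
proof -
  have "finite (I \<inter> coreach u)" using finite_subset[OF initial_states finite_states] by simp
  then have "start_state u \<in> I \<inter> coreach u" unfolding start_state_def using assms by (rule Min_in)
  then show "start_state u \<in> I" "start_state u \<in> coreach u" by auto
qed

lemma computed_transduction_eq:
  assumes "\<forall>u. (g u = None \<longleftrightarrow> \<not> (\<exists>qs. is_run Q \<delta> I F u qs)) \<and>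
              (\<forall>qs. is_run Q \<delta> I F u qs \<longrightarrow> g u = Some (run_output \<mu> u qs))"
  shows "g u = (if I \<inter> coreach u = {} then None else Some (concat (run_blocks (start_state u) u)))"
proof (cases "I \<inter> coreach u = {}")
  case False
  note start = start_state[OF False]
  have "is_run Q \<delta> I F u (canonical_run (start_state u) u)"
    using canonical_run_from[OF start(2)] start(1) is_run_iff_singleton canonical_run_0 by metis
  then show ?thesis
    using assms canonical_run_from[OF start(2)] False by simp
qed (use assms ex_run_iff_coreach in simp)

text \<open>The simulating automaton guesses the co-accessible set of the remaining suffix and
  follows the canonical run inside it; its guesses are confirmed by the final state, whose
  set must be \<open>F\<close>.\<close>

definition labelled_blocks :: "('a \<times> 'l) list \<Rightarrow> ('b list \<times> 'l) list" where
  "labelled_blocks U = zip (run_blocks (start_state (map fst U)) (map fst U)) (map snd U)"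

definition sim_states :: "'s set \<Rightarrow> (nat set \<times> nat \<times> 's) set" where
  "sim_states S = {(R, q, s). R \<subseteq> Q \<and> q \<in> R \<and> s \<in> S}"

definition sim_trans :: "'s set \<Rightarrow> ('s \<times> ('b list \<times> 'l) \<times> 's) set \<Rightarrow> ('a \<times> 'l) set
    \<Rightarrow> ((nat set \<times> nat \<times> 's) \<times> ('a \<times> 'l) \<times> (nat set \<times> nat \<times> 's)) set" where
  "sim_trans S \<Delta> A = {((R, q, s), (a, l), (R', q', s')) | R q s a l R' q' s'.
      (R, q, s) \<in> sim_states S \<and> (R', q', s') \<in> sim_states S \<and> (a, l) \<in> A \<and>
      R = pre_states a R' \<and> q' = Min {y \<in> R'. (q, a, y) \<in> \<delta>} \<and> (s, (\<mu> (q, a, q'), l), s') \<in> \<Delta>}"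

definition sim_final :: "'s set \<Rightarrow> 's set \<Rightarrow> (nat set \<times> nat \<times> 's) set" where
  "sim_final S Fs = {(R, q, s). (R, q, s) \<in> sim_states S \<and> R = F \<and> s \<in> Fs}"

definition sim_init :: "'s set \<Rightarrow> 's set \<Rightarrow> (nat set \<times> nat \<times> 's) set" where
  "sim_init S Is = {(R, q, s). (R, q, s) \<in> sim_states S \<and> I \<inter> R \<noteq> {} \<and> q = Min (I \<inter> R) \<and> s \<in> Is}"

lemma accepts_sim_trans:
  fixes \<Delta> :: "('s \<times> ('b list \<times> 'l) \<times> 's) set"
  assumes "\<Delta> \<subseteq> S \<times> UNIV \<times> S" and "(R, q, s) \<in> sim_states S"
  shows "accepts (sim_trans S \<Delta> A) (sim_final S Fs) (R, q, s) U \<longleftrightarrow>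
    R = coreach (map fst U) \<and> U \<in> lists A \<and>
    accepts \<Delta> Fs s (zip (run_blocks q (map fst U)) (map snd U))"
  using assms(2)
proof (induction U arbitrary: R q s)
  case Nil
  then show ?case by (auto simp: sim_final_def coreach_Nil)
next
  case (Cons x U)
  obtain a l where x: "x = (a, l)" by (cases x)
  let ?w = "map fst U"
  show ?case
  proof
    assume "accepts (sim_trans S \<Delta> A) (sim_final S Fs) (R, q, s) (x # U)"
    then obtain R' q' s' where
      tr: "((R, q, s), x, (R', q', s')) \<in> sim_trans S \<Delta> A" and
      acc: "accepts (sim_trans S \<Delta> A) (sim_final S Fs) (R', q', s') U"
      by auto
    have tr': "(R', q', s') \<in> sim_states S" "(a, l) \<in> A" "R = pre_states a R'"
      "q' = Min {y \<in> R'. (q, a, y) \<in> \<delta>}" "(s, (\<mu> (q, a, q'), l), s') \<in> \<Delta>"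
      using tr unfolding x sim_trans_def by blast+
    have IH: "R' = coreach ?w \<and> U \<in> lists A \<and> accepts \<Delta> Fs s' (zip (run_blocks q' ?w) (map snd U))"
      using Cons.IH[OF tr'(1)] acc by simp
    then have "q' = next_state q a ?w" using tr'(4) unfolding next_state_def by simp
    then show "R = coreach (map fst (x # U)) \<and> x # U \<in> lists A \<and>
        accepts \<Delta> Fs s (zip (run_blocks q (map fst (x # U))) (map snd (x # U)))"
      using IH tr' x coreach_Cons by auto
  next
    assume H: "R = coreach (map fst (x # U)) \<and> x # U \<in> lists A \<and>
        accepts \<Delta> Fs s (zip (run_blocks q (map fst (x # U))) (map snd (x # U)))"
    let ?q' = "next_state q a ?w"
    have R: "R = coreach (a # ?w)" "(a, l) \<in> A" "U \<in> lists A" using H x by auto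
    obtain s' where s': "(s, (\<mu> (q, a, ?q'), l), s') \<in> \<Delta>"
      "accepts \<Delta> Fs s' (zip (run_blocks ?q' ?w) (map snd U))"
      using H x by auto
    have "q \<in> coreach (a # ?w)" using Cons.prems R(1) unfolding sim_states_def by blast
    then have "?q' \<in> coreach ?w" by (rule next_state(1))
    moreover have "s' \<in> S" using s'(1) assms(1) by blast
    ultimately have st': "(coreach ?w, ?q', s') \<in> sim_states S"
      unfolding sim_states_def using coreach_subset by blast
    have "R = pre_states a (coreach ?w)" using R(1) coreach_Cons by simp
    then have "((R, q, s), (a, l), (coreach ?w, ?q', s')) \<in> sim_trans S \<Delta> A"
      unfolding sim_trans_def using Cons.prems st' R(2) s'(1) by (simp add: next_state_def)
    moreover have "accepts (sim_trans S \<Delta> A) (sim_final S Fs) (coreach ?w, ?q', s') U"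
      using Cons.IH[OF st'] s'(2) R(3) by simp
    ultimately show "accepts (sim_trans S \<Delta> A) (sim_final S Fs) (R, q, s) (x # U)"
      unfolding x accepts.simps by blast
  qed
qed

lemma accepts_sim_init:
  fixes \<Delta> :: "('s \<times> ('b list \<times> 'l) \<times> 's) set"
  assumes "\<Delta> \<subseteq> S \<times> UNIV \<times> S" "Is \<subseteq> S"
  shows "(\<exists>st\<in>sim_init S Is. accepts (sim_trans S \<Delta> A) (sim_final S Fs) st U) \<longleftrightarrow>
    U \<in> lists A \<and> I \<inter> coreach (map fst U) \<noteq> {} \<and> (\<exists>s\<in>Is. accepts \<Delta> Fs s (labelled_blocks U))"
proof -
  let ?u = "map fst U"
  have "(R, q, s) \<in> sim_init S Is \<and> accepts (sim_trans S \<Delta> A) (sim_final S Fs) (R, q, s) U \<longleftrightarrow>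
     R = coreach ?u \<and> q = start_state ?u \<and> s \<in> Is \<and> U \<in> lists A \<and> I \<inter> coreach ?u \<noteq> {} \<and>
     accepts \<Delta> Fs s (labelled_blocks U)" for R q s
  proof (cases "(R, q, s) \<in> sim_states S")
    case True
    then show ?thesis
      unfolding accepts_sim_trans[OF assms(1) True] sim_init_def labelled_blocks_def start_state_def
      by auto
  next
    case False
    have "(coreach ?u, start_state ?u, s) \<in> sim_states S" if "s \<in> Is" "I \<inter> coreach ?u \<noteq> {}"
      unfolding sim_states_def using that assms(2) coreach_subset start_state(2) by blast
    then show ?thesis using False unfolding sim_init_def by auto
  qed
  then show ?thesis by (metis prod_cases3)
qed

lemma regular_on_labelled_blocks:
  fixes \<Delta> :: "('s \<times> ('b list \<times> 'l) \<times> 's) set"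
  assumes "finite S" "\<Delta> \<subseteq> S \<times> UNIV \<times> S" "Fs \<subseteq> S" "Is \<subseteq> S"
  shows "regular_on A {U \<in> lists A. I \<inter> coreach (map fst U) \<noteq> {} \<and>
    (\<exists>s\<in>Is. accepts \<Delta> Fs s (labelled_blocks U))}"
proof -
  have "finite (sim_states S)"
    by (rule finite_subset[of _ "Pow Q \<times> Q \<times> S"]) (auto simp: sim_states_def finite_states assms(1))
  moreover have "sim_trans S \<Delta> A \<subseteq> sim_states S \<times> A \<times> sim_states S"
    "sim_init S Is \<subseteq> sim_states S" "sim_final S Fs \<subseteq> sim_states S"
    unfolding sim_trans_def sim_init_def sim_final_def by blast+
  ultimately have "regular_on A {U. \<exists>st\<in>sim_init S Is. accepts (sim_trans S \<Delta> A) (sim_final S Fs) st U}"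
    by (rule regular_on_accepts)
  then show ?thesis unfolding accepts_sim_init[OF assms(2,4)] by simp
qed

end

section \<open>Padded alphabets\<close>

text \<open>Only the restriction of \<open>pad_order\<close> to letters of equal length matters; comparing
  lengths first merely makes it a linear order.\<close>

abbreviation encode :: "nat list \<Rightarrow> nat" where "encode \<equiv> to_nat"
abbreviation decode :: "nat \<Rightarrow> nat list" where "decode \<equiv> from_nat"

definition short_words :: "nat \<Rightarrow> 'b set \<Rightarrow> 'b list set" where
  "short_words c B = {w. length w \<le> c \<and> set w \<subseteq> B}"

definition pad_alphabet :: "nat \<Rightarrow> nat set \<Rightarrow> nat set" where
  "pad_alphabet c B = encode ` short_words c B"

definition length_word_lt :: "'b rel \<Rightarrow> 'b list \<Rightarrow> 'b list \<Rightarrow> bool" where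
  "length_word_lt r w w' \<longleftrightarrow> length w < length w' \<or> length w = length w' \<and> word_lt r w w'"

definition pad_order :: "nat \<Rightarrow> nat set \<Rightarrow> nat rel \<Rightarrow> nat rel" where
  "pad_order c B r = {(x, y). x \<in> pad_alphabet c B \<and> y \<in> pad_alphabet c B \<and>
     length_word_lt r (decode x) (decode y)}"

lemma finite_short_words: "finite B \<Longrightarrow> finite (short_words c B)"
  unfolding short_words_def using finite_lists_length_le[of B c] by (simp add: conj_commute)

lemma encode_Nil_in_pad_alphabet: "encode [] \<in> pad_alphabet c B"
  unfolding pad_alphabet_def short_words_def by (rule imageI) simp

lemma decode_pad_alphabet:
  "x \<in> pad_alphabet c B \<Longrightarrow> decode x \<in> short_words c B \<and> encode (decode x) = x"
  unfolding pad_alphabet_def by auto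

lemma strict_linear_order_on_pad_order:
  assumes "strict_linear_order_on B r"
  shows "strict_linear_order_on (pad_alphabet c B) (pad_order c B r)"
proof -
  have r: "trans r" "irrefl r" "total_on B r"
    using assms by (auto simp: strict_linear_order_on_def)
  have "trans (pad_order c B r)"
  proof (rule transI)
    fix x y z assume "(x, y) \<in> pad_order c B r" "(y, z) \<in> pad_order c B r"
    then show "(x, z) \<in> pad_order c B r"
      unfolding pad_order_def length_word_lt_def
      using word_lt_trans[OF r(1), of "decode x" "decode y" "decode z"] by auto
  qed
  moreover have "irrefl (pad_order c B r)"
    unfolding irrefl_def pad_order_def length_word_lt_def using word_lt_irrefl[OF r(2)] by simp
  moreover have "total_on (pad_alphabet c B) (pad_order c B r)"
    unfolding total_on_def
  proof (intro ballI impI)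
    fix x y assume xy: "x \<in> pad_alphabet c B" "y \<in> pad_alphabet c B" "x \<noteq> y"
    then have "decode x \<noteq> decode y" "set (decode x) \<subseteq> B" "set (decode y) \<subseteq> B"
      using decode_pad_alphabet[of x c B] decode_pad_alphabet[of y c B]
      by (auto simp: short_words_def)
    then have "length_word_lt r (decode x) (decode y) \<or> length_word_lt r (decode y) (decode x)"
      unfolding length_word_lt_def using word_lt_total[OF r(3), of "decode x" "decode y"]
      by (cases "length (decode x)" "length (decode y)" rule: linorder_cases) auto
    then show "(x, y) \<in> pad_order c B r \<or> (y, x) \<in> pad_order c B r"
      unfolding pad_order_def using xy by blast
  qed
  ultimately show ?thesis by (simp add: strict_linear_order_on_def)
qed

lemma finite_pad_alphabet: "finite B \<Longrightarrow> finite (pad_alphabet c B)"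
  unfolding pad_alphabet_def using finite_short_words by blast

definition block_lengths :: "nat list \<Rightarrow> nat list" where
  "block_lengths b = map (\<lambda>x. length (decode x)) b"

definition unpad :: "nat list \<Rightarrow> nat list" where
  "unpad b = concat (map decode b)"

lemma unpad_append: "unpad (b @ b') = unpad b @ unpad b'"
  unfolding unpad_def by simp

lemma unpad_Cons: "unpad (x # b) = decode x @ unpad b"
  unfolding unpad_def by simp

lemma length_unpad: "length (unpad b) = sum_list (block_lengths b)"
  unfolding unpad_def block_lengths_def by (simp add: length_concat o_def)

text \<open>Among letter tuples with equal block lengths, unpadding is monotone: the blocks of
  two such tuples have the same positions, and the most significant differing letter of
  the tuples contains the most significant differing letter of the unpadded words.\<close>

lemma unpad_mono:
  assumes "trans r" and "set b \<subseteq> pad_alphabet c B" "set b' \<subseteq> pad_alphabet c B"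
    and "block_lengths b = block_lengths b'" and "word_lt (pad_order c B r) b b'"
  shows "word_lt r (unpad b) (unpad b')"
proof -
  have len: "length b = length b'"
    using assms(4) unfolding block_lengths_def by (metis length_map)
  obtain i where i: "i < length b" "(b!i, b'!i) \<in> pad_order c B r"
    and above: "\<forall>j. i < j \<and> j < length b \<longrightarrow> b!j = b'!j"
    using assms(5) unfolding word_lt_def by blast
  have len_i: "length (decode (b!i)) = length (decode (b'!i))"
    using assms(4) i(1) len unfolding block_lengths_def by (metis nth_map)
  then have lt_i: "word_lt r (decode (b!i)) (decode (b'!i))"
    using i(2) unfolding pad_order_def length_word_lt_def by simp
  have "length (unpad (take i b)) = length (unpad (take i b'))"
    unfolding length_unpad block_lengths_def using assms(4)
    by (metis block_lengths_def take_map)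
  moreover have "drop (Suc i) b = drop (Suc i) b'"
    by (rule nth_equalityI) (use len above in auto)
  moreover have "unpad b = unpad (take i b) @ decode (b!i) @ unpad (drop (Suc i) b)"
    "unpad b' = unpad (take i b') @ decode (b'!i) @ unpad (drop (Suc i) b')"
    using id_take_nth_drop[OF i(1)] id_take_nth_drop[of i b'] i(1) len
    by (metis unpad_append unpad_Cons)+
  ultimately show ?thesis using word_lt_append[OF lt_i len_i] by simp
qed

fun split_blocks :: "nat list \<Rightarrow> 'x list \<Rightarrow> 'x list list" where
  "split_blocks [] v = []"
| "split_blocks (l # ls) v = take l v # split_blocks ls (drop l v)"

lemma concat_split_blocks: "length v = sum_list ls \<Longrightarrow> concat (split_blocks ls v) = v"
  by (induction ls arbitrary: v) simp_all

lemma map_length_split_blocks: "length v = sum_list ls \<Longrightarrow> map length (split_blocks ls v) = ls"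
  by (induction ls arbitrary: v) simp_all

lemma set_split_blocks: "w \<in> set (split_blocks ls v) \<Longrightarrow> set w \<subseteq> set v"
  by (induction ls arbitrary: v) (auto dest: in_set_takeD in_set_dropD)

lemma unpad_image:
  assumes "\<forall>l\<in>set ls. l \<le> c"
  shows "unpad ` {b. set b \<subseteq> pad_alphabet c B \<and> block_lengths b = ls} =
    {v. length v = sum_list ls \<and> set v \<subseteq> B}"
proof (intro equalityI subsetI)
  fix v assume "v \<in> unpad ` {b. set b \<subseteq> pad_alphabet c B \<and> block_lengths b = ls}"
  then obtain b where b: "set b \<subseteq> pad_alphabet c B" "block_lengths b = ls" "v = unpad b" by blast
  have "set (decode x) \<subseteq> B" if "x \<in> set b" for x
    using decode_pad_alphabet[of x c B] that b(1) by (auto simp: short_words_def)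
  then show "v \<in> {v. length v = sum_list ls \<and> set v \<subseteq> B}"
    using b(2,3) length_unpad unfolding unpad_def by auto
next
  fix v assume "v \<in> {v. length v = sum_list ls \<and> set v \<subseteq> B}"
  then have v: "length v = sum_list ls" "set v \<subseteq> B" by auto
  let ?b = "map encode (split_blocks ls v)"
  have "w \<in> short_words c B" if "w \<in> set (split_blocks ls v)" for w
  proof -
    have "length w \<in> set (map length (split_blocks ls v))" using that by simp
    then have "length w \<in> set ls" unfolding map_length_split_blocks[OF v(1)] .
    then show ?thesis
      using assms set_split_blocks[OF that] v(2) unfolding short_words_def by auto
  qed
  then have "set ?b \<subseteq> pad_alphabet c B" unfolding pad_alphabet_def by auto
  moreover have "block_lengths ?b = ls"
    unfolding block_lengths_def using map_length_split_blocks[OF v(1)] by (simp add: o_def)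
  moreover have "unpad ?b = v"
    unfolding unpad_def using concat_split_blocks[OF v(1)] by (simp add: o_def)
  ultimately show "v \<in> unpad ` {b. set b \<subseteq> pad_alphabet c B \<and> block_lengths b = ls}"
    by (metis (mono_tags, lifting) image_eqI mem_Collect_eq)
qed

lemma enum_words_pad:
  assumes "finite B" "strict_linear_order_on B r" "\<forall>l\<in>set ls. l \<le> c"
  shows "map unpad (filter (\<lambda>b. block_lengths b = ls)
      (enum_words (pad_alphabet c B) (pad_order c B r) (length ls))) = enum_words B r (sum_list ls)"
proof (rule sym, rule enum_words_eqI[OF assms(1,2)])
  let ?E = "enum_words (pad_alphabet c B) (pad_order c B r) (length ls)"
  have pad: "finite (pad_alphabet c B)" "strict_linear_order_on (pad_alphabet c B) (pad_order c B r)"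
    using finite_pad_alphabet[OF assms(1)] strict_linear_order_on_pad_order[OF assms(2)] .
  have "length b = length ls" if "block_lengths b = ls" for b
    using that unfolding block_lengths_def by auto
  then have "set (filter (\<lambda>b. block_lengths b = ls) ?E) =
      {b. set b \<subseteq> pad_alphabet c B \<and> block_lengths b = ls}"
    unfolding set_filter set_enum_words[OF pad] by auto
  then show "set (map unpad (filter (\<lambda>b. block_lengths b = ls) ?E)) = {v. length v = sum_list ls \<and> set v \<subseteq> B}"
    using unpad_image[OF assms(3)] by simp
  have "trans r" using assms(2) by (simp add: strict_linear_order_on_def)
  moreover have "sorted_wrt (word_lt (pad_order c B r)) (filter (\<lambda>b. block_lengths b = ls) ?E)"
    using sorted_enum_words[OF pad] by (simp add: sorted_wrt_filter)
  ultimately show "sorted_wrt (word_lt r) (map unpad (filter (\<lambda>b. block_lengths b = ls) ?E))"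
    unfolding sorted_wrt_map
    by (elim sorted_wrt_mono_rel[rotated] unpad_mono) (auto simp: set_enum_words[OF pad])
qed

lemma concat_defined_pad_layer:
  assumes "finite B" "strict_linear_order_on B r" "\<forall>l\<in>set ls. l \<le> c"
    and "\<And>b. length b = length ls \<Longrightarrow> set b \<subseteq> pad_alphabet c B \<Longrightarrow>
      G b = (if block_lengths b = ls then H (unpad b) else Some [])"
  shows "concat_defined (map G (enum_words (pad_alphabet c B) (pad_order c B r) (length ls))) =
    concat_defined (map H (enum_words B r (sum_list ls)))"
proof -
  let ?E = "enum_words (pad_alphabet c B) (pad_order c B r) (length ls)"
  have G: "G b = (if block_lengths b = ls then H (unpad b) else Some [])" if "b \<in> set ?E" for b
    using assms(4) that
    unfolding set_enum_words[OF finite_pad_alphabet[OF assms(1)] strict_linear_order_on_pad_order[OF assms(2)]]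
    by blast
  have "concat_defined (map G ?E) = concat_defined (map G (filter (\<lambda>b. block_lengths b = ls) ?E))"
    using G by (intro concat_defined_filter[symmetric]) auto
  also have "map G (filter (\<lambda>b. block_lengths b = ls) ?E) =
      map H (map unpad (filter (\<lambda>b. block_lengths b = ls) ?E))"
    unfolding map_map o_def using G by (intro map_cong) auto
  finally show ?thesis unfolding enum_words_pad[OF assms(1-3)] .
qed

definition zip_columns :: "'x list \<Rightarrow> nat list list \<Rightarrow> ('x \<times> nat list) list" where
  "zip_columns u cols = map (\<lambda>i. (u!i, map (\<lambda>c. c!i) cols)) [0..<length u]"

lemma length_zip_columns [simp]: "length (zip_columns u cols) = length u"
  unfolding zip_columns_def by simp

lemma nth_zip_columns [simp]: "i < length u \<Longrightarrow> zip_columns u cols ! i = (u!i, map (\<lambda>c. c!i) cols)"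
  unfolding zip_columns_def by simp

lemma zip_columns_Nil [simp]: "zip_columns [] cols = []"
  unfolding zip_columns_def by simp

lemma map_fst_zip_columns [simp]: "map fst (zip_columns u cols) = u"
  by (rule nth_equalityI) auto

lemma zip_columns_no_columns: "zip_columns u [] = map (\<lambda>a. (a, [])) u"
  by (rule nth_equalityI) auto

lemma zip_columns_snoc:
  assumes "length b = length u"
  shows "map (\<lambda>((a, bs), x). (a, bs @ [x])) (zip (zip_columns u cols) b) = zip_columns u (cols @ [b])"
  by (rule nth_equalityI) (use assms in auto)

lemma zip_columns_Cons:
  assumes "[] \<notin> set cols"
  shows "zip_columns (a # u) cols = (a, map hd cols) # zip_columns u (map tl cols)"
proof (rule nth_equalityI)
  fix i assume "i < length (zip_columns (a # u) cols)"
  moreover have "c ! 0 = hd c" "c ! Suc j = tl c ! j" if "c \<in> set cols" for c j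
    using that assms by (metis hd_conv_nth, metis list.collapse nth_Cons_Suc)
  ultimately show "zip_columns (a # u) cols ! i = ((a, map hd cols) # zip_columns u (map tl cols)) ! i"
    by (cases i) auto
qed simp

lemma zip_columns_append:
  assumes "\<forall>d\<in>set ds. length d = length x" "length ds = length es"
  shows "zip_columns (x @ v) (map2 (@) ds es) = zip_columns x ds @ zip_columns v es"
proof (rule nth_equalityI)
  fix i assume "i < length (zip_columns (x @ v) (map2 (@) ds es))"
  moreover have "map (\<lambda>c. c ! i) (map2 (@) ds es) =
      (if i < length x then map (\<lambda>c. c ! i) ds else map (\<lambda>c. c ! (i - length x)) es)"
    by (rule nth_equalityI) (use assms in \<open>auto simp: nth_append\<close>)
  ultimately show "zip_columns (x @ v) (map2 (@) ds es) ! i = (zip_columns x ds @ zip_columns v es) ! i"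
    by (auto simp: nth_append)
qed simp

definition block_fits :: "nat \<Rightarrow> 'x list \<times> nat list \<Rightarrow> bool" where
  "block_fits k ob \<longleftrightarrow> (\<forall>c<k. length (decode (snd ob ! c)) = length (fst ob))"

definition decode_block :: "nat \<Rightarrow> 'x list \<times> nat list \<Rightarrow> ('x \<times> nat list) list" where
  "decode_block k ob = zip_columns (fst ob) (map (\<lambda>c. decode (snd ob ! c)) [0..<k])"

lemma list_all_block_fits_iff:
  assumes "length Os = length u" "length cols = k" "\<forall>col\<in>set cols. length col = length u"
  shows "list_all (block_fits k) (zip Os (map snd (zip_columns u cols))) \<longleftrightarrow>
    (\<forall>col\<in>set cols. block_lengths col = map length Os)"
proof -
  have "list_all (block_fits k) (zip Os (map snd (zip_columns u cols))) \<longleftrightarrow>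
      (\<forall>c<k. \<forall>i<length u. length (decode (cols ! c ! i)) = length (Os ! i))"
    using assms(1,2) by (auto simp: list_all_length block_fits_def)
  also have "\<dots> \<longleftrightarrow> (\<forall>col\<in>set cols. block_lengths col = map length Os)"
    unfolding block_lengths_def list_eq_iff_nth_eq all_set_conv_all_nth
    using assms by auto
  finally show ?thesis .
qed

lemma concat_decode_block:
  assumes "length Os = length u" "length cols = k"
    and "\<forall>col\<in>set cols. block_lengths col = map length Os"
  shows "concat (map (decode_block k) (zip Os (map snd (zip_columns u cols)))) =
    zip_columns (concat Os) (map unpad cols)"
  using assms
proof (induction Os arbitrary: u cols)
  case (Cons ob Os)
  obtain a u' where u: "u = a # u'" using Cons.prems(1) by (cases u) auto
  have col: "col \<noteq> []" "length (decode (hd col)) = length ob"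
    "block_lengths (tl col) = map length Os" "unpad col = decode (hd col) @ unpad (tl col)"
    if "col \<in> set cols" for col
    using Cons.prems(3) that by (cases col; auto simp: block_lengths_def unpad_Cons)+
  then have "[] \<notin> set cols" by blast
  then have zc: "zip_columns u cols = (a, map hd cols) # zip_columns u' (map tl cols)"
    unfolding u by (rule zip_columns_Cons)
  have IH: "concat (map (decode_block k) (zip Os (map snd (zip_columns u' (map tl cols))))) =
      zip_columns (concat Os) (map unpad (map tl cols))"
    using Cons.IH[of u' "map tl cols"] Cons.prems(1,2) u col(3) by simp
  have "map (\<lambda>c. decode (map hd cols ! c)) [0..<k] = map (\<lambda>col. decode (hd col)) cols"
    by (rule nth_equalityI) (use Cons.prems(2) in auto)
  then have "decode_block k (ob, map hd cols) = zip_columns ob (map (\<lambda>col. decode (hd col)) cols)"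
    unfolding decode_block_def by simp
  moreover have "map unpad cols = map2 (@) (map (\<lambda>col. decode (hd col)) cols) (map (\<lambda>col. unpad (tl col)) cols)"
    unfolding map2_map_map using col(4) by simp
  moreover have "zip_columns (ob @ concat Os) \<dots> =
      zip_columns ob (map (\<lambda>col. decode (hd col)) cols) @ zip_columns (concat Os) (map (\<lambda>col. unpad (tl col)) cols)"
    by (rule zip_columns_append) (use col(2) in auto)
  ultimately show ?case unfolding zc using IH by (simp add: o_def)
qed simp

lemma simple_on_pullback:
  fixes h :: "'x list \<Rightarrow> 'c list option" and D :: "'y list \<Rightarrow> 'x list"
  assumes "simple_on A h" and "regular_on A' Z" and "G \<inter> Z = {}"
    and "\<And>L. regular_on A L \<Longrightarrow> regular_on A' {U \<in> G. D U \<in> L}"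
  shows "simple_on A' (\<lambda>U. if U \<in> G then h (D U) else if U \<in> Z then Some [] else None)"
proof -
  obtain P :: "('x list set \<times> 'c list) list" where
    P_reg: "\<forall>(L, w) \<in> set P. regular_on A L \<and> length w \<le> 1" and
    P_disj: "\<forall>i < length P. \<forall>j < length P. i \<noteq> j \<longrightarrow> fst (P ! i) \<inter> fst (P ! j) = {}" and
    P_sem: "\<forall>v. (h v = None \<longleftrightarrow> (\<forall>(L, w) \<in> set P. v \<notin> L)) \<and>
      (\<forall>(L, w) \<in> set P. v \<in> L \<longrightarrow> h v = Some w)"
    using assms(1) unfolding simple_on_def by blast
  define pull where "pull L = {U \<in> G. D U \<in> L}" for L
  define P' where "P' = (Z, []) # map (\<lambda>(L, w). (pull L, w)) P"
  have "\<forall>(L, w) \<in> set P'. regular_on A' L \<and> length w \<le> 1"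
    unfolding P'_def pull_def using P_reg assms(2,4) by auto
  moreover have "\<forall>i < length P'. \<forall>j < length P'. i \<noteq> j \<longrightarrow> fst (P' ! i) \<inter> fst (P' ! j) = {}"
  proof (intro allI impI)
    fix i j assume ij: "i < length P'" "j < length P'" "i \<noteq> j"
    have Z: "Z \<inter> pull L = {}" for L unfolding pull_def using assms(3) by blast
    have "pull (fst (P ! i')) \<inter> pull (fst (P ! j')) = {}"
      if "i' < length P" "j' < length P" "i' \<noteq> j'" for i' j'
      using P_disj that unfolding pull_def by blast
    then show "fst (P' ! i) \<inter> fst (P' ! j) = {}"
      using ij Z unfolding P'_def
      by (cases i; cases j) (auto simp: case_prod_beta Int_commute)
  qed
  moreover have "(h' U = None \<longleftrightarrow> (\<forall>(L, w) \<in> set P'. U \<notin> L)) \<and>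
      (\<forall>(L, w) \<in> set P'. U \<in> L \<longrightarrow> h' U = Some w)"
    if "h' = (\<lambda>U. if U \<in> G then h (D U) else if U \<in> Z then Some [] else None)" for h' U
    using that P_sem[rule_format, of "D U"] assms(3)
    unfolding P'_def pull_def by (auto split: if_splits)
  ultimately show ?thesis unfolding simple_on_def by blast
qed

section \<open>Precomposition with a rational transduction\<close>

locale composition = nfa_transducer Q \<delta> I F \<mu>
  for Q \<delta> I F and \<mu> :: "nat \<times> 'a::finite \<times> nat \<Rightarrow> 'b list" +
  fixes Ls :: "(nat set \<times> nat rel) list" and h :: "('b \<times> nat list) list \<Rightarrow> 'c list option"
  assumes ordered_alphabets: "\<forall>(B, r)\<in>set Ls. finite B \<and> strict_linear_order_on B r"
begin

definition pad_layer :: "nat set \<times> nat rel \<Rightarrow> nat set \<times> nat rel" where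
  "pad_layer Br = (pad_alphabet max_output (fst Br), pad_order max_output (fst Br) (snd Br))"

lemma ordered_pad_layers:
  "\<forall>(B, r)\<in>set (map pad_layer Ls). finite B \<and> strict_linear_order_on B r"
  using ordered_alphabets finite_pad_alphabet strict_linear_order_on_pad_order
  by (auto simp: pad_layer_def)

definition in_domain :: "('a \<times> nat list) list \<Rightarrow> bool" where
  "in_domain U \<longleftrightarrow> U \<in> lists (tuple_alphabet (map pad_layer Ls)) \<and> I \<inter> coreach (map fst U) \<noteq> {}"

definition fitting :: "('a \<times> nat list) list \<Rightarrow> bool" where
  "fitting U \<longleftrightarrow> list_all (block_fits (length Ls)) (labelled_blocks U)"

definition decoded :: "('a \<times> nat list) list \<Rightarrow> ('b \<times> nat list) list" where
  "decoded U = concat (map (decode_block (length Ls)) (labelled_blocks U))"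

text \<open>Padded tuples that do not fit the output blocks of the canonical run contribute the
  empty word, so that the remaining ones are exactly the unpaddings of all tuples over the
  original alphabets.\<close>

definition composed_base :: "('a \<times> nat list) list \<Rightarrow> 'c list option" where
  "composed_base U =
     (if U \<in> {U. in_domain U \<and> fitting U} then h (decoded U)
      else if U \<in> {U. in_domain U \<and> \<not> fitting U} then Some [] else None)"

lemma accepts_fitting:
  "accepts {(b, x, b'). b' = (b \<or> \<not> block_fits (length Ls) x)} {True} b xs \<longleftrightarrow>
     b \<or> \<not> list_all (block_fits (length Ls)) xs"
  by (induction xs arbitrary: b) auto

lemma regular_on_not_fitting:
  "regular_on (tuple_alphabet (map pad_layer Ls)) {U. in_domain U \<and> \<not> fitting U}"
proof -
  let ?\<Delta> = "{(b, x, b'). b' = (b \<or> \<not> block_fits (length Ls) x)}"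
  have "regular_on (tuple_alphabet (map pad_layer Ls))
    {U \<in> lists (tuple_alphabet (map pad_layer Ls)). I \<inter> coreach (map fst U) \<noteq> {} \<and>
      (\<exists>s\<in>{False}. accepts ?\<Delta> {True} s (labelled_blocks U))}"
    by (rule regular_on_labelled_blocks) auto
  moreover have "(\<exists>s\<in>{False}. accepts ?\<Delta> {True} s (labelled_blocks U)) \<longleftrightarrow> \<not> fitting U" for U
    unfolding accepts_fitting fitting_def by auto
  ultimately show ?thesis unfolding in_domain_def by simp
qed

lemma accepts_decoded:
  assumes "\<delta>' \<subseteq> S \<times> A \<times> S" "s \<in> S"
  shows "accepts {(s, x, s'). s \<in> S \<and> s' \<in> S \<and> block_fits (length Ls) x \<and>
      accepts \<delta>' {s'} s (decode_block (length Ls) x)} F' s xs \<longleftrightarrow>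
    list_all (block_fits (length Ls)) xs \<and> accepts \<delta>' F' s (concat (map (decode_block (length Ls)) xs))"
  using assms(2)
proof (induction xs arbitrary: s)
  case (Cons x xs)
  have "s' \<in> S" if "accepts \<delta>' {s'} s (decode_block (length Ls) x)" for s'
    using accepts_singleton_in_states[OF assms(1) Cons.prems that] .
  then show ?case using Cons.IH Cons.prems by (auto simp: accepts_append)
qed simp

lemma regular_on_decoded_preimage:
  assumes "regular_on (tuple_alphabet Ls) L"
  shows "regular_on (tuple_alphabet (map pad_layer Ls)) {U \<in> {U. in_domain U \<and> fitting U}. decoded U \<in> L}"
proof -
  obtain S :: "nat set" and \<delta>' I' F' where aut: "finite S" "\<delta>' \<subseteq> S \<times> tuple_alphabet Ls \<times> S"
    "I' \<subseteq> S" "F' \<subseteq> S" and L: "L = {w. \<exists>q\<in>I'. accepts \<delta>' F' q w}"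
    using regular_onE_accepts[OF assms] by blast
  let ?\<Delta> = "{(s, x, s'). s \<in> S \<and> s' \<in> S \<and> block_fits (length Ls) x \<and>
      accepts \<delta>' {s'} s (decode_block (length Ls) x)}"
  have "(\<exists>s\<in>I'. accepts ?\<Delta> F' s (labelled_blocks U)) \<longleftrightarrow> fitting U \<and> decoded U \<in> L" for U
    unfolding fitting_def decoded_def L using accepts_decoded[OF aut(2)] aut(3) by blast
  moreover have "regular_on (tuple_alphabet (map pad_layer Ls))
    {U \<in> lists (tuple_alphabet (map pad_layer Ls)). I \<inter> coreach (map fst U) \<noteq> {} \<and>
      (\<exists>s\<in>I'. accepts ?\<Delta> F' s (labelled_blocks U))}"
    by (rule regular_on_labelled_blocks) (use aut in auto)
  ultimately show ?thesis unfolding in_domain_def by (simp add: conj_assoc)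
qed

lemma simple_on_composed_base:
  assumes "simple_on (tuple_alphabet Ls) h"
  shows "simple_on (tuple_alphabet (map pad_layer Ls)) composed_base"
  unfolding composed_base_def[abs_def]
  by (rule simple_on_pullback[OF assms regular_on_not_fitting _ regular_on_decoded_preimage]) auto

abbreviation padded_columns :: "'x list \<Rightarrow> nat list list \<Rightarrow> (nat set \<times> nat rel) list \<Rightarrow> bool" where
  "padded_columns u cols Bs \<equiv>
     list_all2 (\<lambda>col Br. length col = length u \<and> set col \<subseteq> pad_alphabet max_output (fst Br)) cols Bs"

lemma composed_base_zip_columns:
  assumes "I \<inter> coreach u \<noteq> {}" "padded_columns u cols Ls"
  defines "Os \<equiv> run_blocks (start_state u) u"
  shows "composed_base (zip_columns u cols) =
    (if \<forall>col\<in>set cols. block_lengths col = map length Os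
     then h (zip_columns (concat Os) (map unpad cols)) else Some [])"
proof -
  let ?U = "zip_columns u cols"
  have len: "length cols = length Ls" using assms(2) by (rule list_all2_lengthD)
  have cols: "length (cols!j) = length u" "set (cols!j) \<subseteq> pad_alphabet max_output (fst (Ls!j))"
    if "j < length Ls" for j
    using list_all2_nthD[OF assms(2), of j] len that by auto
  have "x \<in> tuple_alphabet (map pad_layer Ls)" if x: "x \<in> set ?U" for x
  proof -
    obtain i where i: "i < length ?U" "?U ! i = x" using x unfolding in_set_conv_nth by blast
    have "cols!j!i \<in> pad_alphabet max_output (fst (Ls!j))" if "j < length Ls" for j
      using cols[OF that] i(1) by auto
    then show ?thesis
      using i len unfolding tuple_alphabet_def pad_layer_def by auto
  qed
  then have dom: "in_domain ?U" unfolding in_domain_def using assms(1) by auto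
  have cols_len: "\<forall>col\<in>set cols. length col = length u"
    using cols(1) len by (auto simp: in_set_conv_nth)
  have blocks: "labelled_blocks ?U = zip Os (map snd ?U)"
    unfolding labelled_blocks_def Os_def by simp
  have fit: "fitting ?U \<longleftrightarrow> (\<forall>col\<in>set cols. block_lengths col = map length Os)"
    unfolding fitting_def blocks Os_def
    by (rule list_all_block_fits_iff) (use len cols_len in simp_all)
  show ?thesis
  proof (cases "\<forall>col\<in>set cols. block_lengths col = map length Os")
    case True
    then have "decoded ?U = zip_columns (concat Os) (map unpad cols)"
      unfolding decoded_def blocks Os_def
      by (intro concat_decode_block) (simp_all add: len Os_def)
    then show ?thesis using True dom fit unfolding composed_base_def by simp
  next
    case False
    then show ?thesis using dom fit unfolding composed_base_def by auto
  qed
qed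

lemma lexmap_pad_layers_Cons:
  "lexmap (map pad_layer ((B, r) # rest)) h' W =
     maplex (pad_alphabet max_output B) (pad_order max_output B r)
       (\<lambda>w. lexmap (map pad_layer rest) h' (map (\<lambda>((a, bs), b). (a, bs @ [b])) w)) W"
  by (simp add: pad_layer_def)

lemma set_enum_words_pad_layer:
  assumes "(B, r) \<in> set Ls"
  shows "set (enum_words (pad_alphabet max_output B) (pad_order max_output B r) n) =
    {b. length b = n \<and> set b \<subseteq> pad_alphabet max_output B}"
  using ordered_alphabets assms finite_pad_alphabet strict_linear_order_on_pad_order
  by (intro set_enum_words) auto

lemma lexmap_composed_base_undefined:
  assumes "I \<inter> coreach u = {}" "set rest \<subseteq> set Ls"
  shows "lexmap (map pad_layer rest) composed_base (zip_columns u cols) = None"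
  using assms(2)
proof (induction rest arbitrary: cols)
  case Nil
  then show ?case using assms(1) by (simp add: composed_base_def in_domain_def)
next
  case (Cons Br rest)
  obtain B r where Br: "Br = (B, r)" by fastforce
  let ?E = "enum_words (pad_alphabet max_output B) (pad_order max_output B r) (length u)"
  let ?G = "\<lambda>b. lexmap (map pad_layer rest) composed_base
    (map (\<lambda>((a, bs), b). (a, bs @ [b])) (zip (zip_columns u cols) b))"
  let ?b = "replicate (length u) (encode [])"
  have "(B, r) \<in> set Ls" using Cons.prems Br by simp
  then have "?b \<in> set ?E"
    using encode_Nil_in_pad_alphabet by (simp add: set_enum_words_pad_layer set_replicate_conv_if)
  moreover have "?G ?b = None"
  proof -
    have "?G ?b = lexmap (map pad_layer rest) composed_base (zip_columns u (cols @ [?b]))"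
      by (subst zip_columns_snoc) simp_all
    also have "\<dots> = None" using Cons.IH Cons.prems by simp
    finally show ?thesis .
  qed
  ultimately have "None \<in> ?G ` set ?E" by (rule rev_image_eqI[OF _ sym])
  then show ?case
    unfolding Br lexmap_pad_layers_Cons maplex_concat_defined concat_defined_def by simp
qed

lemma concat_defined_empty: "\<forall>x\<in>set xs. G x = Some [] \<Longrightarrow> concat_defined (map G xs) = Some []"
  using concat_defined_filter[of xs "\<lambda>_. False" G] by (simp add: concat_defined_def)

lemma lexmap_pad_layers_Cons_composed_base:
  assumes "I \<inter> coreach u \<noteq> {}" "(B, r) \<in> set Ls"
  defines "Os \<equiv> run_blocks (start_state u) u"
  assumes step: "\<And>b. length b = length u \<Longrightarrow> set b \<subseteq> pad_alphabet max_output B \<Longrightarrow>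
    lexmap (map pad_layer rest) composed_base (zip_columns u (cols @ [b])) =
      (if \<forall>col\<in>set (cols @ [b]). block_lengths col = map length Os
       then lexmap rest h (zip_columns (concat Os) (map unpad (cols @ [b]))) else Some [])"
  shows "lexmap (map pad_layer ((B, r) # rest)) composed_base (zip_columns u cols) =
      (if \<forall>col\<in>set cols. block_lengths col = map length Os
       then lexmap ((B, r) # rest) h (zip_columns (concat Os) (map unpad cols)) else Some [])"
proof -
  have B: "finite B" "strict_linear_order_on B r" using ordered_alphabets assms(2) by auto
  let ?E = "enum_words (pad_alphabet max_output B) (pad_order max_output B r) (length u)"
  let ?G = "\<lambda>b. lexmap (map pad_layer rest) composed_base
    (map (\<lambda>((a, bs), b). (a, bs @ [b])) (zip (zip_columns u cols) b))"
  let ?H = "\<lambda>v. lexmap rest h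
    (map (\<lambda>((a, bs), b). (a, bs @ [b])) (zip (zip_columns (concat Os) (map unpad cols)) v))"
  have G: "?G b = lexmap (map pad_layer rest) composed_base (zip_columns u (cols @ [b]))"
    if "length b = length u" for b
    using zip_columns_snoc[OF that] by simp
  have lhs: "lexmap (map pad_layer ((B, r) # rest)) composed_base (zip_columns u cols) =
      concat_defined (map ?G ?E)"
    unfolding lexmap_pad_layers_Cons maplex_concat_defined by simp
  show ?thesis
  proof (cases "\<forall>col\<in>set cols. block_lengths col = map length Os")
    case True
    have len: "length (map length Os) = length u" unfolding Os_def by simp
    have "\<forall>l\<in>set (map length Os). l \<le> max_output"
      using length_run_blocks_le[OF start_state(2)[OF assms(1)]] unfolding Os_def by auto
    moreover have "?G b = (if block_lengths b = map length Os then ?H (unpad b) else Some [])"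
      if "length b = length (map length Os)" "set b \<subseteq> pad_alphabet max_output B" for b
    proof -
      have "length (unpad b) = length (concat Os)" if "block_lengths b = map length Os"
        using that by (simp add: length_unpad length_concat)
      then show ?thesis
        using G step that True len zip_columns_snoc[of "unpad b" "concat Os"] by auto
    qed
    ultimately have "concat_defined (map ?G ?E) =
        concat_defined (map ?H (enum_words B r (length (concat Os))))"
      using concat_defined_pad_layer[OF B, of "map length Os" max_output ?G ?H] len
      by (simp add: length_concat)
    then show ?thesis unfolding lhs using True by (simp add: maplex_concat_defined)
  next
    case False
    have "?G b = Some []" if "b \<in> set ?E" for b
      using G step False that set_enum_words_pad_layer[OF assms(2)] by auto
    then show ?thesis unfolding lhs if_not_P[OF False] by (simp add: concat_defined_empty)
  qed
qed

lemma lexmap_composed_base_defined: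
  assumes "I \<inter> coreach u \<noteq> {}"
  defines "Os \<equiv> run_blocks (start_state u) u"
  shows "Ls = pre @ rest \<Longrightarrow> padded_columns u cols pre \<Longrightarrow>
    lexmap (map pad_layer rest) composed_base (zip_columns u cols) =
      (if \<forall>col\<in>set cols. block_lengths col = map length Os
       then lexmap rest h (zip_columns (concat Os) (map unpad cols)) else Some [])"
proof (induction rest arbitrary: pre cols)
  case Nil
  then show ?case using composed_base_zip_columns[OF assms(1)] unfolding Os_def by simp
next
  case (Cons Br rest)
  obtain B r where Br: "Br = (B, r)" by fastforce
  have "(B, r) \<in> set Ls" using Cons.prems(1) Br by simp
  moreover have "padded_columns u (cols @ [b]) (pre @ [(B, r)])"
    if "length b = length u" "set b \<subseteq> pad_alphabet max_output B" for b
    using Cons.prems(2) that by (simp add: list_all2_appendI)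
  ultimately show ?case
    unfolding Br Os_def using Cons.IH[of "pre @ [(B, r)]", unfolded Os_def] Cons.prems(1) Br
    by (intro lexmap_pad_layers_Cons_composed_base[OF assms(1)]) simp_all
qed

lemma lexmap_composed_base:
  "lexmap (map pad_layer Ls) composed_base (map (\<lambda>a. (a, [])) u) =
    (if I \<inter> coreach u = {} then None
     else lexmap Ls h (map (\<lambda>b. (b, [])) (concat (run_blocks (start_state u) u))))"
  using lexmap_composed_base_undefined[of u Ls "[]"]
    lexmap_composed_base_defined[of u "[]" Ls "[]"]
  by (simp add: zip_columns_no_columns)

end

theorem mainTheorem18:
  fixes g :: "'a::finite list \<Rightarrow> 'b::finite list option"
    and f :: "'b list \<Rightarrow> 'c::finite list option"
    and k :: nat
  assumes "k \<ge> 1" and "rational g" and "lex k f"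
  shows "lex k (\<lambda>u. Option.bind (g u) f)"
proof -
  obtain Q \<delta> I F \<mu> where nfa: "is_nfa UNIV Q \<delta> I F" and
    g: "\<forall>u. (g u = None \<longleftrightarrow> \<not> (\<exists>qs. is_run Q \<delta> I F u qs)) \<and>
          (\<forall>qs. is_run Q \<delta> I F u qs \<longrightarrow> g u = Some (run_output \<mu> u qs))"
    using assms(2) unfolding rational_def by blast
  obtain Ls h where Ls: "length Ls = k" "\<forall>(B, r) \<in> set Ls. finite B \<and> strict_linear_order_on B r"
    and h: "simple_on (tuple_alphabet Ls) h" and f: "f = (\<lambda>u. lexmap Ls h (map (\<lambda>a. (a, [])) u))"
    using assms(3) unfolding lex_def by blast
  interpret composition Q \<delta> I F \<mu> Ls h
    by unfold_locales (use nfa Ls(2) in auto)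
  have "(\<lambda>u. Option.bind (g u) f) = (\<lambda>u. lexmap (map pad_layer Ls) composed_base (map (\<lambda>a. (a, [])) u))"
    using computed_transduction_eq[OF g] by (intro ext) (simp add: lexmap_composed_base f)
  then show ?thesis
    unfolding lex_def using Ls(1) ordered_pad_layers simple_on_composed_base[OF h]
    by (intro exI[of _ "map pad_layer Ls"] exI[of _ composed_base]) simp
qed

end
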